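(* Let $s\in L^1_{\mathrm{loc}}(\mathbb{R})$ be supported in $[0,\infty)$ and let $a,b$ be constants. Suppose there exist $A,B>0$ such that $s(x)+A\log x$ is non-decreasing on $[B,\infty)$, and that the distributional derivative $s'$ satisfies, as $\lambda\to\infty$, $$s'(\lambda x)=a\frac{\delta(x)}{\lambda}+b\frac{\log\lambda}{\lambda}\delta(x)+\frac{b}{\lambda}\operatorname{Pf}\left(\frac{H(x)}{x}\right)+o\left(\frac{1}{\lambda}\right)\quad\text{in }\mathcal{S}'(\mathbb{R}).$$ Then $\lim_{x\to\infty}\left(s(x)-b\log x\right)=a$.
   Context: $\delta$ is the Dirac delta and $H$ the Heaviside function. $\langle \operatorname{Pf}(H(x)/x),\phi\rangle=\int_0^1\frac{\phi(x)-\phi(0)}{x}\,dx+\int_1^\infty\frac{\phi(x)}{x}\,dx$. For a distribution $g$, $g(\lambda x)$ is the distribution $\phi\mapsto \lambda^{-1}\langle g(x),\phi(x/\lambda)\rangle$. The asymptotic relation in $\mathcal{S}'(\mathbb{R})$ means that it holds after pairing both sides with any $\phi\in\mathcal{S}(\mathbb{R})$. *)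

theory Defs
  imports "HOL-Analysis.Analysis"
begin

definition schwartz :: "(real \<Rightarrow> real) \<Rightarrow> bool" where
  "schwartz \<phi> \<longleftrightarrow>
     (\<forall>n x. ((deriv ^^ n) \<phi> has_real_derivative (deriv ^^ Suc n) \<phi> x) (at x)) \<and>
     (\<forall>m n. bounded (range (\<lambda>x. x ^ m * (deriv ^^ n) \<phi> x)))"

type_synonym distr = "(real \<Rightarrow> real) \<Rightarrow> real"

definition locally_integrable_fun :: "(real \<Rightarrow> real) \<Rightarrow> bool" where
  "locally_integrable_fun s \<longleftrightarrow> (\<forall>K. compact K \<longrightarrow> set_integrable lborel K s)"

definition distr_of :: "(real \<Rightarrow> real) \<Rightarrow> distr" where
  "distr_of s = (\<lambda>\<phi>. \<integral>x. s x * \<phi> x \<partial>lborel)"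

definition dderiv :: "distr \<Rightarrow> distr" where
  "dderiv T = (\<lambda>\<phi>. - T (deriv \<phi>))"

text \<open>Dilation: <g(lambda x), phi> = lambda^{-1} <g(x), phi(x/lambda)>.\<close>
definition dilate :: "distr \<Rightarrow> real \<Rightarrow> distr" where
  "dilate T l = (\<lambda>\<phi>. T (\<lambda>x. \<phi> (x / l)) / l)"

definition dirac :: distr where
  "dirac = (\<lambda>\<phi>. \<phi> 0)"

definition pf_H_over_x :: distr where
  "pf_H_over_x = (\<lambda>\<phi>. (LINT x:{0<..1}|lborel. (\<phi> x - \<phi> 0) / x) + (LINT x:{1..}|lborel. \<phi> x / x))"

end

theory Submission
  imports Defs "HOL-Real_Asymp.Real_Asymp" "HOL-Computational_Algebra.Polynomial"
begin

text \<open>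
  Pair the asymptotic expansion of \<open>s'(\<lambda>x)\<close> with a smooth plateau function \<open>\<phi>\<close> that equals 1
  on \<open>[0, c]\<close>, decreases on \<open>[c, d]\<close> and vanishes beyond \<open>d\<close>. Since \<open>s\<close> vanishes on the negative
  axis, integrating by parts turns \<open>\<lambda> \<langle>s'(\<lambda>x), \<phi>\<rangle>\<close> into a weighted mean of \<open>s\<close> over
  \<open>(\<lambda>c, \<lambda>d)\<close>, so this mean is \<open>a + b log \<lambda> + b Pf(H/x)(\<phi>) + o(1)\<close>. The one-sided condition
  that \<open>s + A log\<close> is non-decreasing bounds the mean by \<open>s(\<lambda>c)\<close> and \<open>s(\<lambda>d)\<close> up to
  \<open>A log (d/c)\<close>. Taking \<open>(c, d) = (1, 1 + \<delta>)\<close> and \<open>(1/(1 + \<delta>), 1)\<close>, for which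
  \<open>|Pf(H/x)(\<phi>)| \<le> \<delta>\<close>, squeezes \<open>s(\<lambda>) - b log \<lambda> - a\<close> into \<open>[-\<epsilon>, \<epsilon>]\<close> eventually.
\<close>

section \<open>Smooth functions\<close>

definition smooth :: "(real \<Rightarrow> real) \<Rightarrow> bool" where
  "smooth f \<longleftrightarrow> (\<forall>n x. ((deriv ^^ n) f has_real_derivative (deriv ^^ Suc n) f x) (at x))"

lemma smooth_imp_isCont: "smooth f \<Longrightarrow> isCont f x"
  unfolding smooth_def by (metis DERIV_isCont funpow_0)

lemma smooth_imp_continuous_on: "smooth f \<Longrightarrow> continuous_on S f"
  by (simp add: continuous_at_imp_continuous_on smooth_imp_isCont)

lemma higher_deriv_lincomb:
  assumes "smooth f" "smooth g"
  shows "(deriv ^^ n) (\<lambda>x. a * f x + b * g x) = (\<lambda>x. a * (deriv ^^ n) f x + b * (deriv ^^ n) g x)"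
proof (induction n)
  case (Suc n)
  have "((\<lambda>x. a * (deriv ^^ n) f x + b * (deriv ^^ n) g x) has_real_derivative
          a * (deriv ^^ Suc n) f x + b * (deriv ^^ Suc n) g x) (at x)" for x
    using assms unfolding smooth_def by (metis DERIV_add DERIV_cmult)
  then show ?case
    by (auto simp: Suc.IH intro!: ext DERIV_imp_deriv)
qed simp

lemma smooth_lincomb:
  assumes "smooth f" "smooth g"
  shows "smooth (\<lambda>x. a * f x + b * g x)"
  using assms unfolding smooth_def higher_deriv_lincomb[OF assms]
  by (metis DERIV_add DERIV_cmult)

lemma smooth_if_deriv_smooth:
  assumes "smooth f'" and "\<And>x. (f has_real_derivative f' x) (at x)"
  shows "smooth f"
proof -
  have "deriv f = f'"
    using assms(2) by (auto intro!: ext DERIV_imp_deriv)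
  then have "(deriv ^^ Suc n) f = (deriv ^^ n) f'" for n
    by (simp only: funpow_Suc_right o_apply)
  then show ?thesis
    using assms unfolding smooth_def by (metis funpow_0 not0_implies_Suc)
qed

lemma smooth_compact_support_imp_schwartz:
  assumes f: "smooth f" and supp: "\<And>x. R < \<bar>x\<bar> \<Longrightarrow> f x = 0"
  shows "schwartz f"
proof -
  have outside: "(deriv ^^ n) f x = 0" if "R < \<bar>x\<bar>" for n x
    using that
  proof (induction n arbitrary: x)
    case (Suc n)
    have "open {y::real. R < \<bar>y\<bar>}"
      by (rule open_Collect_less) (auto intro: continuous_intros)
    then have "((deriv ^^ n) f has_real_derivative 0) (at x)"
      by (rule has_field_derivative_transform_within_open[OF DERIV_const]) (use Suc in auto)
    moreover have "((deriv ^^ n) f has_real_derivative (deriv ^^ Suc n) f x) (at x)"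
      using f unfolding smooth_def by blast
    ultimately show ?case
      by (rule DERIV_unique[symmetric])
  qed (use supp in simp)
  have "bounded (range (\<lambda>x. x ^ m * (deriv ^^ n) f x))" for m n
  proof -
    let ?h = "\<lambda>x. x ^ m * (deriv ^^ n) f x"
    have "continuous_on {-\<bar>R\<bar>..\<bar>R\<bar>} ?h"
      using f unfolding smooth_def
      by (intro continuous_intros) (auto intro: DERIV_isCont continuous_at_imp_continuous_on)
    then have "bounded (insert 0 (?h ` {-\<bar>R\<bar>..\<bar>R\<bar>}))"
      by (auto intro: compact_imp_bounded compact_continuous_image)
    moreover have "range ?h \<subseteq> insert 0 (?h ` {-\<bar>R\<bar>..\<bar>R\<bar>})"
      using outside by (force simp: abs_le_iff not_less)
    ultimately show ?thesis
      using bounded_subset by blast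
  qed
  then show ?thesis
    using f unfolding schwartz_def smooth_def by blast
qed

section \<open>Smooth bump, step and plateau functions\<close>

definition flat :: "nat \<Rightarrow> real \<Rightarrow> real" where
  "flat n t = (if 0 < t then exp (- 1 / t) / t ^ n else 0)"

lemma flat_nonneg: "0 \<le> flat n t"
  by (simp add: flat_def)

lemma flat_shift: "t ^ k * flat (n + k) t = flat n t"
  by (simp add: flat_def power_add)

lemma flat_tendsto_0: "(flat n \<longlongrightarrow> 0) (at 0)"
proof (rule filterlim_split_at)
  have "((\<lambda>t::real. exp (- 1 / t) / t ^ n) \<longlongrightarrow> 0) (at_right 0)"
    by real_asymp
  then show "(flat n \<longlongrightarrow> 0) (at_right 0)"
    by (rule Lim_transform_eventually) (simp add: eventually_at_filter flat_def)
  show "(flat n \<longlongrightarrow> 0) (at_left 0)"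
    by (rule Lim_transform_eventually[OF tendsto_const]) (simp add: eventually_at_filter flat_def)
qed

lemma flat_has_derivative:
  "(flat n has_real_derivative flat (n + 2) t - n * flat (n + 1) t) (at t)"
proof -
  consider "0 < t" | "t < 0" | "t = 0"
    by fastforce
  then show ?thesis
  proof cases
    case 1
    have "((\<lambda>t. exp (- 1 / t) / t ^ n) has_real_derivative flat (n + 2) t - n * flat (n + 1) t) (at t)"
      using 1 by (auto intro!: derivative_eq_intros simp: flat_def) (cases n; simp add: field_simps)
    then show ?thesis
      by (rule has_field_derivative_transform_within_open[where S="{0<..}"]) (use 1 in \<open>auto simp: flat_def\<close>)
  next
    case 2
    have "(flat n has_real_derivative 0) (at t)"
      by (rule has_field_derivative_transform_within_open[OF DERIV_const, where S="{..<0}"])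
         (use 2 in \<open>auto simp: flat_def\<close>)
    then show ?thesis
      using 2 by (simp add: flat_def)
  next
    case 3
    \<comment> \<open>the difference quotient of \<open>flat n\<close> at \<open>0\<close> is \<open>flat (n + 1)\<close>\<close>
    have "((\<lambda>y. (flat n y - flat n 0) / (y - 0)) \<longlongrightarrow> 0) (at 0)"
      by (rule Lim_transform_eventually[OF flat_tendsto_0[of "n + 1"]])
         (auto simp: eventually_at_filter flat_def)
    then show ?thesis
      using 3 by (simp add: has_field_derivative_iff flat_def)
  qed
qed

definition flat_poly :: "real poly \<Rightarrow> real poly \<Rightarrow> nat \<Rightarrow> real \<Rightarrow> real" where
  "flat_poly Q P n x = poly P x * flat n (poly Q x)"

text \<open>The derivative of \<open>P(x) flat\<^sub>n(Q(x))\<close> has the same shape, because \<open>flat n q\<close> and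
  \<open>flat (n + 1) q\<close> are \<open>q\<^sup>2\<close> and \<open>q\<close> times \<open>flat (n + 2) q\<close>.\<close>
definition flat_poly_deriv :: "real poly \<Rightarrow> real poly \<Rightarrow> nat \<Rightarrow> real poly" where
  "flat_poly_deriv Q P n = pderiv P * Q\<^sup>2 + P * pderiv Q - smult (of_nat n) (P * Q * pderiv Q)"

lemma flat_poly_has_derivative:
  "(flat_poly Q P n has_real_derivative flat_poly Q (flat_poly_deriv Q P n) (n + 2) x) (at x)"
proof -
  let ?q = "poly Q x"
  have "(flat_poly Q P n has_real_derivative
           poly (pderiv P) x * flat n ?q
           + (flat (n + 2) ?q - n * flat (n + 1) ?q) * poly (pderiv Q) x * poly P x) (at x)"
    unfolding flat_poly_def[abs_def]
    by (rule DERIV_mult[OF poly_DERIV DERIV_chain2[OF flat_has_derivative poly_DERIV]])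
  moreover have "flat n ?q = ?q\<^sup>2 * flat (n + 2) ?q" "flat (n + 1) ?q = ?q * flat (n + 2) ?q"
    using flat_shift[of ?q 2 n] flat_shift[of ?q 1 "n + 1"] by simp_all
  ultimately show ?thesis
    by (simp add: flat_poly_def flat_poly_deriv_def algebra_simps)
qed

lemma higher_deriv_flat_poly: "\<exists>P' n'. (deriv ^^ k) (flat_poly Q P n) = flat_poly Q P' n'"
proof (induction k arbitrary: P n)
  case (Suc k)
  have "deriv (flat_poly Q P n) = flat_poly Q (flat_poly_deriv Q P n) (n + 2)"
    by (intro ext DERIV_imp_deriv flat_poly_has_derivative)
  then show ?case
    by (simp only: funpow_Suc_right o_apply Suc.IH)
qed auto

lemma smooth_flat_poly: "smooth (flat_poly Q P n)"
  unfolding smooth_def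
proof (intro allI)
  fix k x
  obtain P' n' where "(deriv ^^ k) (flat_poly Q P n) = flat_poly Q P' n'"
    using higher_deriv_flat_poly by blast
  then show "((deriv ^^ k) (flat_poly Q P n) has_real_derivative (deriv ^^ Suc k) (flat_poly Q P n) x) (at x)"
    by (metis DERIV_imp_deriv flat_poly_has_derivative funpow.simps(2) o_apply)
qed

definition bump :: "real \<Rightarrow> real \<Rightarrow> real \<Rightarrow> real" where
  "bump c d x = flat 0 ((x - c) * (d - x))"

lemma smooth_bump: "smooth (bump c d)"
proof -
  have "bump c d = flat_poly [:- (c * d), c + d, - 1:] 1 0"
    by (auto simp: bump_def flat_poly_def algebra_simps intro!: ext)
  then show ?thesis
    by (simp add: smooth_flat_poly)
qed

lemma continuous_on_bump: "continuous_on S (bump c d)"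
  by (rule smooth_imp_continuous_on[OF smooth_bump])

lemma bump_eq_0: "c < d \<Longrightarrow> \<not> (c < x \<and> x < d) \<Longrightarrow> bump c d x = 0"
  by (auto simp: bump_def flat_def zero_less_mult_iff)

lemma bump_nonneg: "0 \<le> bump c d x"
  by (simp add: bump_def flat_nonneg)

lemma bump_le_1: "bump c d x \<le> 1"
  by (simp add: bump_def flat_def)

lemma bump_integrable_on: "bump c d integrable_on {a..b}"
  by (rule integrable_continuous_interval[OF continuous_on_bump])

text \<open>Any base point below \<open>c\<close> would do; \<open>c - 1\<close> keeps \<open>c\<close> in the interior of the domain of integration.\<close>
definition bump_primitive :: "real \<Rightarrow> real \<Rightarrow> real \<Rightarrow> real" where
  "bump_primitive c d x = integral {c - 1..x} (bump c d)"

abbreviation bump_mass :: "real \<Rightarrow> real \<Rightarrow> real" where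
  "bump_mass c d \<equiv> bump_primitive c d d"

lemma bump_primitive_eq_0:
  assumes "c < d" "x \<le> c"
  shows "bump_primitive c d x = 0"
proof -
  have "integral {c - 1..x} (bump c d) = integral {c - 1..x} (\<lambda>_. 0)"
    by (rule integral_cong) (use assms in \<open>auto intro: bump_eq_0\<close>)
  then show ?thesis
    by (simp add: bump_primitive_def)
qed

lemma bump_primitive_eq_mass:
  assumes "c < d" "d \<le> x"
  shows "bump_primitive c d x = bump_mass c d"
proof -
  have "integral {c - 1..d} (bump c d) + integral {d..x} (bump c d) = integral {c - 1..x} (bump c d)"
    by (rule Henstock_Kurzweil_Integration.integral_combine[OF _ _ bump_integrable_on]) (use assms in auto)
  moreover have "integral {d..x} (bump c d) = integral {d..x} (\<lambda>_. 0)"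
    by (rule integral_cong) (use assms in \<open>auto intro: bump_eq_0\<close>)
  ultimately show ?thesis
    by (simp add: bump_primitive_def)
qed

lemma bump_primitive_nonneg: "0 \<le> bump_primitive c d x"
  unfolding bump_primitive_def by (rule Henstock_Kurzweil_Integration.integral_nonneg[OF bump_integrable_on]) (simp add: bump_nonneg)

lemma bump_primitive_le_mass:
  assumes "c < d"
  shows "bump_primitive c d x \<le> bump_mass c d"
proof (cases "c - 1 \<le> x \<and> x \<le> d")
  case True
  have "integral {c - 1..x} (bump c d) + integral {x..d} (bump c d) = integral {c - 1..d} (bump c d)"
    by (rule Henstock_Kurzweil_Integration.integral_combine[OF _ _ bump_integrable_on]) (use True in auto)
  moreover have "0 \<le> integral {x..d} (bump c d)"
    by (rule Henstock_Kurzweil_Integration.integral_nonneg[OF bump_integrable_on]) (simp add: bump_nonneg)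
  ultimately show ?thesis
    by (simp add: bump_primitive_def)
next
  case False
  then consider "x < c - 1" | "d < x"
    by linarith
  then show ?thesis
  proof cases
    case 1
    then show ?thesis
      using bump_primitive_nonneg[of c d d] by (simp add: bump_primitive_def)
  next
    case 2
    then show ?thesis
      using bump_primitive_eq_mass[OF assms, of x] by simp
  qed
qed

lemma bump_primitive_has_derivative:
  assumes "c < d"
  shows "(bump_primitive c d has_real_derivative bump c d x) (at x)"
proof (cases "c - 1 < x")
  case True
  have "((\<lambda>x. integral {c - 1..x} (bump c d)) has_real_derivative bump c d x) (at x within {c - 1..x + 1})"
    by (rule integral_has_real_derivative) (use True continuous_on_bump in auto)
  then show ?thesis
    using True by (simp add: at_within_Icc_at bump_primitive_def[abs_def])
next
  case False
  have "(bump_primitive c d has_real_derivative 0) (at x)"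
    by (rule has_field_derivative_transform_within_open[OF DERIV_const, where S="{..<c}"])
       (use False assms bump_primitive_eq_0[OF assms] in auto)
  then show ?thesis
    using False assms bump_eq_0 by simp
qed

lemma bump_mass_pos:
  assumes "c < d"
  shows "0 < bump_mass c d"
proof -
  define w where "w = (d - c) / 4"
  have w: "0 < w"
    using assms by (simp add: w_def)
  have "exp (- 1 / (w * w)) \<le> bump c d x" if "x \<in> {c + w..d - w}" for x
  proof -
    have "w * w \<le> (x - c) * (d - x)"
      using that w by (intro mult_mono) auto
    then have "1 / ((x - c) * (d - x)) \<le> 1 / (w * w)"
      using w by (intro frac_le) auto
    then show ?thesis
      using that w by (simp add: bump_def flat_def)
  qed
  then have "integral {c + w..d - w} (\<lambda>_. exp (- 1 / (w * w))) \<le> integral {c + w..d - w} (bump c d)"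
    by (intro integral_le bump_integrable_on) auto
  moreover have "0 < integral {c + w..d - w} (\<lambda>_. exp (- 1 / (w * w)))"
    using assms by (simp add: w_def field_simps)
  moreover have "integral {c + w..d - w} (bump c d) \<le> integral {c - 1..d} (bump c d)"
    by (rule integral_subset_le) (use w bump_nonneg in \<open>auto intro: bump_integrable_on\<close>)
  ultimately show ?thesis
    by (simp add: bump_primitive_def)
qed

lemma bump_lborel:
  assumes "c < d"
  shows "integrable lborel (bump c d)" "(\<integral>x. bump c d x \<partial>lborel) = bump_mass c d"
proof -
  have indicator_eq: "(\<lambda>x. indicator {c - 1..d} x *\<^sub>R bump c d x) = bump c d"
  proof
    fix x
    show "indicator {c - 1..d} x *\<^sub>R bump c d x = bump c d x"
      using bump_eq_0[OF assms, of x] by (cases "x \<in> {c - 1..d}") auto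
  qed
  have "set_integrable lborel {c - 1..d} (bump c d)"
    unfolding set_integrable_def by (rule borel_integrable_compact) (auto intro: continuous_on_bump)
  then show "integrable lborel (bump c d)"
    by (simp only: set_integrable_def indicator_eq)
  have "set_lebesgue_integral lborel {c - 1..d} (bump c d) = integral {c - 1..d} (bump c d)"
    by (rule set_borel_integral_eq_integral) fact
  then show "(\<integral>x. bump c d x \<partial>lborel) = bump_mass c d"
    by (simp only: set_lebesgue_integral_def indicator_eq bump_primitive_def)
qed

lemma bump_rescaled_lborel:
  assumes "c < d" "0 < l"
  shows "integrable lborel (\<lambda>x. bump c d (x / l))"
    "(\<integral>x. bump c d (x / l) \<partial>lborel) = l * bump_mass c d"
proof -
  show "integrable lborel (\<lambda>x. bump c d (x / l))"
    using lborel_integrable_real_affine[OF bump_lborel(1)[OF assms(1)], of "1 / l" 0] assms by simp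
  have "(\<integral>x. bump c d (x / l) \<partial>lborel) = \<bar>l\<bar> *\<^sub>R (\<integral>x. bump c d ((0 + l * x) / l) \<partial>lborel)"
    by (rule lborel_integral_real_affine) (use assms in simp)
  then show "(\<integral>x. bump c d (x / l) \<partial>lborel) = l * bump_mass c d"
    using assms bump_lborel(2)[OF assms(1)] by simp
qed

definition smooth_step :: "real \<Rightarrow> real \<Rightarrow> real \<Rightarrow> real" where
  "smooth_step c d x = bump_primitive c d x / bump_mass c d"

lemma smooth_step_has_derivative:
  "c < d \<Longrightarrow> (smooth_step c d has_real_derivative bump c d x / bump_mass c d) (at x)"
  unfolding smooth_step_def[abs_def] by (intro DERIV_cdivide bump_primitive_has_derivative)

lemma smooth_step_eq_0: "c < d \<Longrightarrow> x \<le> c \<Longrightarrow> smooth_step c d x = 0"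
  by (simp add: smooth_step_def bump_primitive_eq_0)

lemma smooth_step_eq_1: "c < d \<Longrightarrow> d \<le> x \<Longrightarrow> smooth_step c d x = 1"
  using bump_mass_pos[of c d] bump_primitive_eq_mass[of c d x] by (simp add: smooth_step_def)

lemma smooth_step_bounds: "c < d \<Longrightarrow> 0 \<le> smooth_step c d x \<and> smooth_step c d x \<le> 1"
  using bump_mass_pos bump_primitive_nonneg bump_primitive_le_mass
  by (simp add: smooth_step_def divide_le_eq_1)

definition plateau :: "real \<Rightarrow> real \<Rightarrow> real \<Rightarrow> real" where
  "plateau c d x = smooth_step (- d) (- c) x - smooth_step c d x"

lemma plateau_has_derivative:
  assumes "c < d"
  shows "(plateau c d has_real_derivative
           bump (- d) (- c) x / bump_mass (- d) (- c) - bump c d x / bump_mass c d) (at x)"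
  unfolding plateau_def[abs_def] using assms by (intro DERIV_diff smooth_step_has_derivative) auto

lemma smooth_plateau:
  assumes "c < d"
  shows "smooth (plateau c d)"
proof (rule smooth_if_deriv_smooth[OF _ plateau_has_derivative[OF assms]])
  show "smooth (\<lambda>x. bump (- d) (- c) x / bump_mass (- d) (- c) - bump c d x / bump_mass c d)"
    using smooth_lincomb[OF smooth_bump smooth_bump, of "1 / bump_mass (- d) (- c)" "- d" "- c"
        "- 1 / bump_mass c d" c d]
    by simp
qed

lemma plateau_eq_on_nonneg:
  assumes "0 < c" "c < d" "0 \<le> x"
  shows "plateau c d x = 1 - smooth_step c d x"
  using assms by (simp add: plateau_def smooth_step_eq_1)

lemma plateau_eq_0:
  assumes "0 < c" "c < d" "d < \<bar>x\<bar>"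
  shows "plateau c d x = 0"
  using assms by (cases "0 \<le> x") (simp_all add: plateau_def smooth_step_eq_0 smooth_step_eq_1)

lemma schwartz_plateau: "0 < c \<Longrightarrow> c < d \<Longrightarrow> schwartz (plateau c d)"
  by (rule smooth_compact_support_imp_schwartz[OF smooth_plateau]) (auto intro: plateau_eq_0)

lemma plateau_eq_1: "0 < c \<Longrightarrow> c < d \<Longrightarrow> 0 \<le> x \<Longrightarrow> x \<le> c \<Longrightarrow> plateau c d x = 1"
  by (simp add: plateau_eq_on_nonneg smooth_step_eq_0)

lemma plateau_bounds:
  "0 < c \<Longrightarrow> c < d \<Longrightarrow> 0 \<le> x \<Longrightarrow> 0 \<le> plateau c d x \<and> plateau c d x \<le> 1"
  using smooth_step_bounds[of c d x] by (simp add: plateau_eq_on_nonneg)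

lemma continuous_on_plateau: "c < d \<Longrightarrow> continuous_on S (plateau c d)"
  by (rule smooth_imp_continuous_on[OF smooth_plateau])

section \<open>The principal value of a plateau\<close>

lemma integral_le_box:
  fixes g :: "real \<Rightarrow> real"
  assumes "g \<in> borel_measurable lborel" "\<And>x. 0 \<le> g x" "\<And>x. g x \<le> K * indicator {\<alpha>..\<beta>} x"
    and "\<alpha> \<le> \<beta>"
  shows "(\<integral>x. g x \<partial>lborel) \<le> K * (\<beta> - \<alpha>)"
proof -
  have box: "integrable lborel (\<lambda>x. K * indicator {\<alpha>..\<beta>} x)"
    using assms(4) by simp
  have "integrable lborel g"
    by (rule Bochner_Integration.integrable_bound[OF box assms(1)])
       (use assms(2,3) in \<open>auto intro!: AE_I2 simp: abs_le_iff intro: order.trans[OF assms(3)]\<close>)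
  then have "(\<integral>x. g x \<partial>lborel) \<le> (\<integral>x. K * indicator {\<alpha>..\<beta>} x \<partial>lborel)"
    by (intro integral_mono box assms(3))
  then show ?thesis
    using assms(4) by simp
qed

lemma pf_plateau_bounds:
  assumes "0 < c" "c \<le> 1" "c < d" "1 \<le> d"
  shows "- ((1 - c) / c) \<le> pf_H_over_x (plateau c d)" "pf_H_over_x (plateau c d) \<le> d - 1"
proof -
  let ?p = "plateau c d"
  define g1 where "g1 x = indicator {0<..1} x * ((1 - ?p x) / x)" for x
  define g2 where "g2 x = indicator {1..} x * (?p x / x)" for x
  have "?p 0 = 1"
    using assms by (simp add: plateau_eq_1)
  then have "pf_H_over_x ?p = (\<integral>x. - g1 x \<partial>lborel) + (\<integral>x. g2 x \<partial>lborel)"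
    unfolding pf_H_over_x_def set_lebesgue_integral_def
    by (intro arg_cong2[where f="(+)"] Bochner_Integration.integral_cong)
       (auto simp: g1_def g2_def indicator_def field_simps)
  then have pf_eq: "pf_H_over_x ?p = - (\<integral>x. g1 x \<partial>lborel) + (\<integral>x. g2 x \<partial>lborel)"
    by simp
  have meas: "g1 \<in> borel_measurable lborel" "g2 \<in> borel_measurable lborel"
    unfolding g1_def[abs_def] g2_def[abs_def]
    using borel_measurable_continuous_onI[OF continuous_on_plateau[OF assms(3)]] by measurable
  have g1_bounds: "0 \<le> g1 x \<and> g1 x \<le> 1 / c * indicator {c..1} x" for x
  proof (cases "0 < x \<and> x \<le> 1")
    case True
    have "0 \<le> ?p x" "?p x \<le> 1"
      using plateau_bounds[OF assms(1,3)] True by auto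
    moreover have "?p x = 1" if "x \<le> c"
      using plateau_eq_1[OF assms(1,3)] True that by auto
    moreover have "(1 - ?p x) / x \<le> 1 / c" if "c < x"
      using \<open>0 \<le> ?p x\<close> True that assms(1) by (auto intro: order.trans[OF divide_right_mono frac_le])
    ultimately show ?thesis
      using True by (cases "x \<le> c") (auto simp: g1_def indicator_def)
  qed (use assms(1) in \<open>auto simp: g1_def indicator_def\<close>)
  have g2_bounds: "0 \<le> g2 x \<and> g2 x \<le> 1 * indicator {1..d} x" for x
  proof (cases "1 \<le> x")
    case True
    have "0 \<le> ?p x" "?p x \<le> 1"
      using plateau_bounds[OF assms(1,3)] True by auto
    moreover have "?p x = 0" if "d < x"
      using plateau_eq_0[OF assms(1,3)] True that by auto
    ultimately show ?thesis
      using True by (cases "x \<le> d") (auto simp: g2_def indicator_def divide_le_eq_1)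
  qed (auto simp: g2_def indicator_def)
  have "(\<integral>x. g1 x \<partial>lborel) \<le> 1 / c * (1 - c)"
    by (rule integral_le_box[OF meas(1)]) (use g1_bounds assms in auto)
  moreover have "(\<integral>x. g2 x \<partial>lborel) \<le> 1 * (d - 1)"
    by (rule integral_le_box[OF meas(2)]) (use g2_bounds assms in auto)
  moreover have "0 \<le> (\<integral>x. g1 x \<partial>lborel)" "0 \<le> (\<integral>x. g2 x \<partial>lborel)"
    using g1_bounds g2_bounds by (simp_all add: integral_nonneg)
  ultimately show "- ((1 - c) / c) \<le> pf_H_over_x ?p" "pf_H_over_x ?p \<le> d - 1"
    unfolding pf_eq by auto
qed

section \<open>Means against dilated bumps\<close>

text \<open>The weight \<open>x \<mapsto> bump c d (x / l)\<close> has total mass \<open>l * bump_mass c d\<close>.\<close>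
definition bump_average :: "(real \<Rightarrow> real) \<Rightarrow> real \<Rightarrow> real \<Rightarrow> real \<Rightarrow> real" where
  "bump_average s c d l = (\<integral>x. s x * bump c d (x / l) \<partial>lborel) / (l * bump_mass c d)"

lemma dilated_derivative_plateau:
  fixes s :: "real \<Rightarrow> real"
  assumes supp: "\<forall>x<0. s x = 0" and cd: "0 < c" "c < d" and l: "0 < l"
  shows "l * dilate (dderiv (distr_of s)) l (plateau c d) = bump_average s c d l"
proof -
  have "((\<lambda>x. plateau c d (x / l)) has_real_derivative
          (bump (- d) (- c) (x / l) / bump_mass (- d) (- c) - bump c d (x / l) / bump_mass c d) / l) (at x)" for x
    using DERIV_chain2[OF plateau_has_derivative[OF cd(2)] DERIV_cdivide[OF DERIV_ident, of l x]] by simp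
  then have deriv_eq: "deriv (\<lambda>x. plateau c d (x / l)) x
      = (bump (- d) (- c) (x / l) / bump_mass (- d) (- c) - bump c d (x / l) / bump_mass c d) / l" for x
    by (rule DERIV_imp_deriv)
  have "s x * deriv (\<lambda>x. plateau c d (x / l)) x = - (s x * bump c d (x / l)) / (l * bump_mass c d)" for x
  proof (cases "x < 0")
    case False
    then have "0 \<le> x / l"
      using l by simp
    then have "bump (- d) (- c) (x / l) = 0"
      using cd by (intro bump_eq_0) auto
    then show ?thesis
      by (simp add: deriv_eq)
  qed (use supp in simp)
  then show ?thesis
    using l by (simp add: dilate_def dderiv_def distr_of_def bump_average_def)
qed

lemma weighted_integral_bounds:
  fixes f w :: "real \<Rightarrow> real"
  assumes f: "set_integrable lborel S f" and w: "integrable lborel w"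
    and w_bounds: "\<And>x. 0 \<le> w x" "\<And>x. w x \<le> K"
    and w_supp: "\<And>x. w x \<noteq> 0 \<Longrightarrow> x \<in> S \<and> m \<le> f x \<and> f x \<le> M"
  shows "m * (\<integral>x. w x \<partial>lborel) \<le> (\<integral>x. f x * w x \<partial>lborel)"
    "(\<integral>x. f x * w x \<partial>lborel) \<le> M * (\<integral>x. w x \<partial>lborel)"
proof -
  have f_S: "integrable lborel (\<lambda>x. indicator S x * f x)"
    using f by (simp add: set_integrable_def)
  have eq: "f x * w x = (indicator S x * f x) * w x" for x
    using w_supp[of x] by (cases "w x = 0") auto
  have "integrable lborel (\<lambda>x. K * (indicator S x * f x))"
    using f_S by simp
  then have "integrable lborel (\<lambda>x. f x * w x)"
  proof (rule Bochner_Integration.integrable_bound)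
    show "(\<lambda>x. f x * w x) \<in> borel_measurable lborel"
      unfolding eq using borel_measurable_integrable[OF f_S] borel_measurable_integrable[OF w]
      by measurable
    have "norm (f x * w x) \<le> norm (K * (indicator S x * f x))" for x
    proof -
      have "\<bar>indicator S x * f x\<bar> * w x \<le> \<bar>indicator S x * f x\<bar> * K"
        by (rule mult_left_mono) (use w_bounds in auto)
      then show ?thesis
        using w_bounds order_trans[OF w_bounds] by (subst eq) (simp add: abs_mult mult.commute)
    qed
    then show "AE x in lborel. norm (f x * w x) \<le> norm (K * (indicator S x * f x))"
      by simp
  qed
  moreover have "integrable lborel (\<lambda>x. c * w x)" for c
    using w by simp
  moreover have "m * w x \<le> f x * w x \<and> f x * w x \<le> M * w x" for x
    using w_supp[of x] w_bounds(1)[of x] by (cases "w x = 0") (auto intro: mult_right_mono)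
  ultimately show "m * (\<integral>x. w x \<partial>lborel) \<le> (\<integral>x. f x * w x \<partial>lborel)"
    "(\<integral>x. f x * w x \<partial>lborel) \<le> M * (\<integral>x. w x \<partial>lborel)"
    by (auto simp flip: integral_mult_right_zero intro!: integral_mono)
qed

lemma mono_on_add_ln_bounds:
  fixes s :: "real \<Rightarrow> real"
  assumes mono: "mono_on {B..} (\<lambda>x. s x + A * ln x)" and "0 \<le> A"
    and "B \<le> u" "0 < u" "u \<le> x" "x \<le> v"
  shows "s u - A * ln (v / u) \<le> s x" "s x \<le> s v + A * ln (v / u)"
proof -
  have "s u + A * ln u \<le> s x + A * ln x" "s x + A * ln x \<le> s v + A * ln v"
    using assms by (auto intro!: mono_onD[OF mono])
  moreover have "A * ln x \<le> A * ln v" "A * ln u \<le> A * ln x"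
    using assms by (auto intro!: mult_left_mono)
  moreover have "A * ln (v / u) = A * ln v - A * ln u"
    using assms by (simp add: ln_div right_diff_distrib)
  ultimately show "s u - A * ln (v / u) \<le> s x" "s x \<le> s v + A * ln (v / u)"
    by linarith+
qed

lemma bump_average_bounds:
  fixes s :: "real \<Rightarrow> real"
  assumes loc: "locally_integrable_fun s"
    and mono: "mono_on {B..} (\<lambda>x. s x + A * ln x)" and A: "0 \<le> A"
    and cd: "0 < c" "c < d" and l: "0 < l" and B: "B \<le> l * c"
  shows "s (l * c) - A * ln (d / c) \<le> bump_average s c d l"
    "bump_average s c d l \<le> s (l * d) + A * ln (d / c)"
proof -
  have ratio: "l * d / (l * c) = d / c"
    using l by simp
  have "x \<in> {l * c..l * d} \<and> s (l * c) - A * ln (d / c) \<le> s x \<and> s x \<le> s (l * d) + A * ln (d / c)"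
    if "bump c d (x / l) \<noteq> 0" for x
  proof -
    have "c < x / l" "x / l < d"
      using bump_eq_0[OF cd(2)] that by blast+
    then have "l * c \<le> x" "x \<le> l * d"
      using l by (simp_all add: field_simps)
    then show ?thesis
      using mono_on_add_ln_bounds[OF mono A B, of x "l * d"] cd l by (simp add: ratio)
  qed
  moreover have "set_integrable lborel {l * c..l * d} s"
    using loc by (simp add: locally_integrable_fun_def)
  ultimately have "(s (l * c) - A * ln (d / c)) * (l * bump_mass c d) \<le> (\<integral>x. s x * bump c d (x / l) \<partial>lborel)"
    "(\<integral>x. s x * bump c d (x / l) \<partial>lborel) \<le> (s (l * d) + A * ln (d / c)) * (l * bump_mass c d)"
    using weighted_integral_bounds[OF _ bump_rescaled_lborel(1)[OF cd(2) l] bump_nonneg bump_le_1]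
    unfolding bump_rescaled_lborel(2)[OF cd(2) l] by blast+
  moreover have "0 < l * bump_mass c d"
    using l bump_mass_pos[OF cd(2)] by simp
  ultimately show "s (l * c) - A * ln (d / c) \<le> bump_average s c d l"
    "bump_average s c d l \<le> s (l * d) + A * ln (d / c)"
    by (simp_all add: bump_average_def pos_le_divide_eq pos_divide_le_eq)
qed

section \<open>The Tauberian argument\<close>

context
  fixes s :: "real \<Rightarrow> real" and a b A B :: real
  assumes loc: "locally_integrable_fun s"
    and supp: "\<forall>x<0. s x = 0"
    and A: "0 \<le> A"
    and mono: "mono_on {B..} (\<lambda>x. s x + A * ln x)"
    and asym: "\<forall>\<phi>. schwartz \<phi> \<longrightarrow>
       ((\<lambda>l. l * (dilate (dderiv (distr_of s)) l \<phi>
              - (a * dirac \<phi> / l + b * (ln l / l) * dirac \<phi> + (b / l) * pf_H_over_x \<phi>)))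
        \<longlongrightarrow> 0) at_top"
begin

lemma bump_average_asymptotics:
  assumes cd: "0 < c" "c < d"
  shows "((\<lambda>l. bump_average s c d l - a - b * ln l - b * pf_H_over_x (plateau c d)) \<longlongrightarrow> 0) at_top"
proof -
  have "dirac (plateau c d) = 1"
    unfolding dirac_def using cd by (simp add: plateau_eq_1)
  have "eventually (\<lambda>l. l * (dilate (dderiv (distr_of s)) l (plateau c d)
              - (a * dirac (plateau c d) / l + b * (ln l / l) * dirac (plateau c d)
                 + (b / l) * pf_H_over_x (plateau c d)))
        = bump_average s c d l - a - b * ln l - b * pf_H_over_x (plateau c d)) at_top"
    using eventually_gt_at_top[of 0]
  proof eventually_elim
    case (elim l)
    then show ?case
      using \<open>dirac (plateau c d) = 1\<close> dilated_derivative_plateau[OF supp cd elim]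
      by (simp add: field_simps)
  qed
  then show ?thesis
    using asym schwartz_plateau[OF cd] by (auto elim: Lim_transform_eventually[rotated])
qed

lemma eventually_log_deviation_less:
  assumes "0 < \<delta>" "0 < \<epsilon>"
  shows "eventually (\<lambda>l. s l - b * ln l - a < (\<bar>b\<bar> + A) * \<delta> + \<epsilon>) at_top"
proof -
  let ?p = "pf_H_over_x (plateau 1 (1 + \<delta>))"
  have "\<bar>?p\<bar> \<le> \<delta>"
    using pf_plateau_bounds[of 1 "1 + \<delta>"] assms by simp
  then have "\<bar>b * ?p\<bar> \<le> \<bar>b\<bar> * \<delta>"
    unfolding abs_mult by (rule mult_left_mono) simp
  then have pf: "b * ?p \<le> \<bar>b\<bar> * \<delta>"
    by linarith
  have Aln: "A * ln (1 + \<delta>) \<le> A * \<delta>"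
    using A assms by (intro mult_left_mono ln_add_one_self_le_self) auto
  have "eventually (\<lambda>l. \<bar>bump_average s 1 (1 + \<delta>) l - a - b * ln l - b * ?p\<bar> < \<epsilon>) at_top"
    using order_tendstoD(2)[OF tendsto_rabs_zero[OF bump_average_asymptotics] \<open>0 < \<epsilon>\<close>] assms by simp
  moreover have "eventually (\<lambda>l. s l - A * ln (1 + \<delta>) \<le> bump_average s 1 (1 + \<delta>) l) at_top"
    using eventually_ge_at_top[of "max 1 B"]
  proof eventually_elim
    case (elim l)
    then show ?case
      using bump_average_bounds(1)[OF loc mono A, of 1 "1 + \<delta>" l] assms by simp
  qed
  ultimately show ?thesis
    by eventually_elim (use pf Aln in \<open>simp only: distrib_right abs_less_iff, linarith\<close>)
qed

lemma eventually_log_deviation_greater: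
  assumes "0 < \<delta>" "0 < \<epsilon>"
  shows "eventually (\<lambda>l. - ((\<bar>b\<bar> + A) * \<delta> + \<epsilon>) < s l - b * ln l - a) at_top"
proof -
  define c where "c = 1 / (1 + \<delta>)"
  have c: "0 < c" "c < 1" "(1 - c) / c = \<delta>" "ln (1 / c) = ln (1 + \<delta>)"
    using assms by (auto simp: c_def field_simps)
  let ?p = "pf_H_over_x (plateau c 1)"
  have "\<bar>?p\<bar> \<le> \<delta>"
    using pf_plateau_bounds[of c 1] c by simp
  then have "\<bar>b * ?p\<bar> \<le> \<bar>b\<bar> * \<delta>"
    unfolding abs_mult by (rule mult_left_mono) simp
  then have pf: "- (\<bar>b\<bar> * \<delta>) \<le> b * ?p"
    by linarith
  have Aln: "A * ln (1 + \<delta>) \<le> A * \<delta>"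
    using A assms by (intro mult_left_mono ln_add_one_self_le_self) auto
  have "eventually (\<lambda>l. \<bar>bump_average s c 1 l - a - b * ln l - b * ?p\<bar> < \<epsilon>) at_top"
    using order_tendstoD(2)[OF tendsto_rabs_zero[OF bump_average_asymptotics] \<open>0 < \<epsilon>\<close>] c by simp
  moreover have "eventually (\<lambda>l. bump_average s c 1 l \<le> s l + A * ln (1 + \<delta>)) at_top"
    using eventually_ge_at_top[of "max 1 (B / c)"]
  proof eventually_elim
    case (elim l)
    then have "B \<le> l * c"
      using c by (simp add: field_simps)
    then show ?case
      using bump_average_bounds(2)[OF loc mono A c(1,2)] elim c by simp
  qed
  ultimately show ?thesis
    by eventually_elim (use pf Aln in \<open>simp only: distrib_right abs_less_iff, linarith\<close>)
qed

end

theorem proposition3p4: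
  fixes s :: "real \<Rightarrow> real" and a b A B :: real
  assumes loc: "locally_integrable_fun s"
    and supp: "\<forall>x<0. s x = 0"
    and tempered: "\<forall>\<phi>. schwartz \<phi> \<longrightarrow> integrable lborel (\<lambda>x. s x * \<phi> x)"
    and AB: "A > 0" "B > 0"
    and mono: "mono_on {B..} (\<lambda>x. s x + A * ln x)"
    and asym: "\<forall>\<phi>. schwartz \<phi> \<longrightarrow>
       ((\<lambda>l. l * (dilate (dderiv (distr_of s)) l \<phi>
              - (a * dirac \<phi> / l + b * (ln l / l) * dirac \<phi> + (b / l) * pf_H_over_x \<phi>)))
        \<longlongrightarrow> 0) at_top"
  shows "((\<lambda>x. s x - b * ln x) \<longlongrightarrow> a) at_top"
proof (rule tendstoI)
  fix e :: real
  assume e: "0 < e"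
  define \<delta> where "\<delta> = e / (2 * (\<bar>b\<bar> + A + 1))"
  have \<delta>: "0 < \<delta>" "0 < e / 2 - (\<bar>b\<bar> + A) * \<delta>"
    using e AB by (auto simp: \<delta>_def field_simps)
  have "0 \<le> A"
    using AB by simp
  note bounds = eventually_log_deviation_less[OF loc supp this mono asym \<delta>]
    eventually_log_deviation_greater[OF loc supp this mono asym \<delta>]
  show "eventually (\<lambda>x. dist (s x - b * ln x) a < e) at_top"
    using bounds by eventually_elim (auto simp: dist_real_def abs_less_iff)
qed

end
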